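(* For every finite set of formulas $T$ and formula $\phi$ of $\mathsf{JRC}$: if $T\models_{\mathsf{JRC}}\phi$, then $T\vdash_{\mathsf{JRC}}\phi$.
   Context: Language of $\mathsf{JRC}$: countable sets $\mathsf{Var}$ (justification variables) and $\mathsf{Prop}$ (atoms). Terms $t ::= x \mid t+t$ ($x\in\mathsf{Var}$); formulas $\phi ::= p \mid {\sim}\phi \mid \phi\wedge\phi \mid \phi\to\phi \mid \phi\rightsquigarrow\phi \mid t{:}\phi$. A Routley relational model is $\mathcal M=(W,W_N,R,R_{Fm},R_{Tm},{*},\mathcal V)$ where $W$ is nonempty, $W_N\subseteq W$ nonempty (normal states); $R\subseteq W\times W\times W$ satisfies: for $w\in W_N$, $Rwvu$ iff $v=u$; $R_{Fm}$ assigns to each formula $\phi$ a relation $R_\phi\subseteq W\times W$; $R_{Tm}$ assigns to each term $t$ a relation $R_t\subseteq W\times W$; ${*}:W\to W$ with $w^{**}=w$; $\mathcal V:\mathsf{Prop}\to\mathcal P(W)$. Truth at every $w\in W$: $p$ iff $w\in\mathcal V(p)$; ${\sim}\phi$ iff $w^*\not\models\phi$; $\phi\wedge\psi$ iff both; $\phi\to\psi$ iff for all $v,u$ with $Rwvu$, $v\models\phi$ implies $u\models\psi$; $\phi\rightsquigarrow\psi$ iff $R_\phi(w)\subseteq[\psi]$; $t{:}\phi$ iff $R_t(w)\subseteq[\phi]$; $[\phi]=\{w\in W:w\models\phi\}$. A $\mathsf{JRC}$-model is a Routley relational model with: (1) $R_\phi(w)\subseteq[\phi]$ for all $w\in W_N$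 and all $\phi$; (2) for all $w\in W$, if $w\in[\phi]$ then $w\in R_\phi(w)$; (3) $R_{s+t}\subseteq R_s\cap R_t$. $T\models_{\mathsf{JRC}}\phi$ iff for every $\mathsf{JRC}$-model and every $w\in W_N$, if all members of $T$ are true at $w$ then $\phi$ is true at $w$. Tableaux: labels are elements of $\{0,1,2,\dots\}\cup\{0^\sharp,1^\sharp,2^\sharp,\dots\}$, with $\bar i=i^\sharp$ and $\overline{i^\sharp}=i$. Nodes have the forms $\phi,+x$; $\phi,-x$; $x\rhd_\phi y$; $x\rhd_t y$; $rxyz$. Rules (applied to a branch; $x,y,z$ arbitrary labels; $j,k$ natural numbers): (T$\sim$) from ${\sim}\phi,+x$ add $\phi,-\bar x$; (F$\sim$) from ${\sim}\phi,-x$ add $\phi,+\bar x$; (T$\wedge$) from $\phi\wedge\psi,+x$ add $\phi,+x$ and $\psi,+x$; (F$\wedge$) from $\phi\wedge\psi,-x$ split into $\phi,-x$ | $\psi,-x$; (T$\to$) from $\phi\to\psi,+x$ and $rxyz$ split into $\phi,-y$ | $\psi,+z$; (F$\to$) from $\phi\to\psi,-x$ add $rxjk$, $\phi,+j$, $\psi,-k$ with $j,k$ new, and $j=k$ if $x=0$; (T$\rightsquigarrow$) from $\phi\rightsquigarrow\psi,+x$ and $x\rhd_\phi y$ add $\psi,+y$; (F$\rightsquigarrow$) for $x\neq0$, from $\phi\rightsquigarrow\psi,-x$ add $x\rhd_\phi j$ and $\psi,-j$, $j$ new; (F$\rightsquigarrow_0$) from $\phi\rightsquigarrow\psi,-0$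 add $0\rhd_\phi j$, $\phi,+j$, $\psi,-j$, $j$ new; (Cut$_r$) if $\phi$ occurs on the branch as the antecedent of a $\rightsquigarrow$-formula and $x$ occurs on the branch, split into $\phi,-x$ | ($\phi,+x$ and $x\rhd_\phi x$); (T:) from $t{:}\phi,+x$ and $x\rhd_t y$ add $\phi,+y$; (F:) from $t{:}\phi,-x$ add $x\rhd_t j$ and $\phi,-j$, $j$ new; ($\rhd_+$) from $x\rhd_{s+t}y$ add $x\rhd_s y$ and $x\rhd_t y$; (Normality) for any $x$ occurring on the branch add $r0xx$. A branch is closed if it contains $\phi,+x$ and $\phi,-x$ for some $\phi,x$; a tableau is closed if all its branches are. $T\vdash_{\mathsf{JRC}}\phi$ iff there is a closed tableau whose initial single branch consists of $\psi,+0$ for each $\psi\in T$ and $\phi,-0$. *)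

theory Defs
  imports Main
begin

datatype tm = TVar nat | Plus tm tm

datatype fm =
    Atom nat
  | Neg fm
  | Conj fm fm
  | Imp fm fm
  | CImp fm fm      \<comment> \<open>the counterfactual-like connective written with a squiggly arrow\<close>
  | Just tm fm

record 'w rmodel =
  W   :: "'w set"
  WN  :: "'w set"
  R   :: "'w \<Rightarrow> 'w \<Rightarrow> 'w \<Rightarrow> bool"
  RF  :: "fm \<Rightarrow> 'w \<Rightarrow> 'w \<Rightarrow> bool"
  RT  :: "tm \<Rightarrow> 'w \<Rightarrow> 'w \<Rightarrow> bool"
  st  :: "'w \<Rightarrow> 'w"
  V   :: "nat \<Rightarrow> 'w set"

fun sat :: "'w rmodel \<Rightarrow> 'w \<Rightarrow> fm \<Rightarrow> bool" where
  "sat M w (Atom p) = (w \<in> V M p)"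
| "sat M w (Neg \<phi>) = (\<not> sat M (st M w) \<phi>)"
| "sat M w (Conj \<phi> \<psi>) = (sat M w \<phi> \<and> sat M w \<psi>)"
| "sat M w (Imp \<phi> \<psi>) = (\<forall>v u. R M w v u \<longrightarrow> sat M v \<phi> \<longrightarrow> sat M u \<psi>)"
| "sat M w (CImp \<phi> \<psi>) = (\<forall>v. RF M \<phi> w v \<longrightarrow> sat M v \<psi>)"
| "sat M w (Just t \<phi>) = (\<forall>v. RT M t w v \<longrightarrow> sat M v \<phi>)"

definition routley_model :: "'w rmodel \<Rightarrow> bool" where
  "routley_model M \<longleftrightarrow>
     W M \<noteq> {} \<and> WN M \<subseteq> W M \<and> WN M \<noteq> {} \<and>
     (\<forall>w v u. R M w v u \<longrightarrow> w \<in> W M \<and> v \<in> W M \<and> u \<in> W M) \<and>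
     (\<forall>w\<in>WN M. \<forall>v\<in>W M. \<forall>u\<in>W M. R M w v u \<longleftrightarrow> v = u) \<and>
     (\<forall>\<phi> w v. RF M \<phi> w v \<longrightarrow> w \<in> W M \<and> v \<in> W M) \<and>
     (\<forall>t w v. RT M t w v \<longrightarrow> w \<in> W M \<and> v \<in> W M) \<and>
     (\<forall>w\<in>W M. st M w \<in> W M \<and> st M (st M w) = w) \<and>
     (\<forall>p. V M p \<subseteq> W M)"

definition jrc_model :: "'w rmodel \<Rightarrow> bool" where
  "jrc_model M \<longleftrightarrow> routley_model M \<and>
     (\<forall>w\<in>WN M. \<forall>\<phi> v. RF M \<phi> w v \<longrightarrow> sat M v \<phi>) \<and>
     (\<forall>w\<in>W M. \<forall>\<phi>. sat M w \<phi> \<longrightarrow> RF M \<phi> w w) \<and>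
     (\<forall>s t w v. RT M (Plus s t) w v \<longrightarrow> RT M s w v \<and> RT M t w v)"

definition entails :: "fm set \<Rightarrow> fm \<Rightarrow> bool" where
  "entails T \<phi> \<longleftrightarrow>
     (\<forall>M :: nat rmodel. jrc_model M \<longrightarrow>
        (\<forall>w\<in>WN M. (\<forall>\<psi>\<in>T. sat M w \<psi>) \<longrightarrow> sat M w \<phi>))"

datatype lbl = L nat | S nat   \<comment> \<open>i and i-sharp\<close>

fun bar :: "lbl \<Rightarrow> lbl" where
  "bar (L i) = S i"
| "bar (S i) = L i"

datatype node =
    TN fm lbl
  | FN fm lbl
  | RelF lbl fm lbl
  | RelT lbl tm lbl
  | R3 lbl lbl lbl

fun node_lbls :: "node \<Rightarrow> lbl set" where
  "node_lbls (TN \<phi> x) = {x}"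
| "node_lbls (FN \<phi> x) = {x}"
| "node_lbls (RelF x \<phi> y) = {x, y}"
| "node_lbls (RelT x t y) = {x, y}"
| "node_lbls (R3 x y z) = {x, y, z}"

definition lbls :: "node set \<Rightarrow> lbl set" where
  "lbls B = (\<Union>n\<in>B. node_lbls n)"

inductive rule1 :: "node set \<Rightarrow> node set \<Rightarrow> bool" where
  T_neg: "TN (Neg \<phi>) x \<in> B \<Longrightarrow> rule1 B {FN \<phi> (bar x)}"
| F_neg: "FN (Neg \<phi>) x \<in> B \<Longrightarrow> rule1 B {TN \<phi> (bar x)}"
| T_conj: "TN (Conj \<phi> \<psi>) x \<in> B \<Longrightarrow> rule1 B {TN \<phi> x, TN \<psi> x}"
| F_imp: "FN (Imp \<phi> \<psi>) x \<in> B \<Longrightarrow> L j \<notin> lbls B \<Longrightarrow> L k \<notin> lbls B \<Longrightarrow>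
          (x = L 0 \<longrightarrow> j = k) \<Longrightarrow> (x \<noteq> L 0 \<longrightarrow> j \<noteq> k) \<Longrightarrow>
          rule1 B {R3 x (L j) (L k), TN \<phi> (L j), FN \<psi> (L k)}"
| T_cimp: "TN (CImp \<phi> \<psi>) x \<in> B \<Longrightarrow> RelF x \<phi> y \<in> B \<Longrightarrow> rule1 B {TN \<psi> y}"
| F_cimp: "x \<noteq> L 0 \<Longrightarrow> FN (CImp \<phi> \<psi>) x \<in> B \<Longrightarrow> L j \<notin> lbls B \<Longrightarrow>
          rule1 B {RelF x \<phi> (L j), FN \<psi> (L j)}"
| F_cimp0: "FN (CImp \<phi> \<psi>) (L 0) \<in> B \<Longrightarrow> L j \<notin> lbls B \<Longrightarrow>
          rule1 B {RelF (L 0) \<phi> (L j), TN \<phi> (L j), FN \<psi> (L j)}"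
| T_just: "TN (Just t \<phi>) x \<in> B \<Longrightarrow> RelT x t y \<in> B \<Longrightarrow> rule1 B {TN \<phi> y}"
| F_just: "FN (Just t \<phi>) x \<in> B \<Longrightarrow> L j \<notin> lbls B \<Longrightarrow>
          rule1 B {RelT x t (L j), FN \<phi> (L j)}"
| Rel_plus: "RelT x (Plus s t) y \<in> B \<Longrightarrow> rule1 B {RelT x s y, RelT x t y}"
| Normality: "x \<in> lbls B \<Longrightarrow> rule1 B {R3 (L 0) x x}"

inductive rule2 :: "node set \<Rightarrow> node set \<Rightarrow> node set \<Rightarrow> bool" where
  F_conj: "FN (Conj \<phi> \<psi>) x \<in> B \<Longrightarrow> rule2 B {FN \<phi> x} {FN \<psi> x}"
| T_imp: "TN (Imp \<phi> \<psi>) x \<in> B \<Longrightarrow> R3 x y z \<in> B \<Longrightarrow> rule2 B {FN \<phi> y} {TN \<psi> z}"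
| Cut_r: "(TN (CImp \<phi> \<psi>) y \<in> B \<or> FN (CImp \<phi> \<psi>) y \<in> B) \<Longrightarrow> x \<in> lbls B \<Longrightarrow>
          rule2 B {FN \<phi> x} {TN \<phi> x, RelF x \<phi> x}"

text \<open>A branch B can be closed: there is a finite tableau rooted at branch B
  all of whose branches are closed.\<close>

inductive closable :: "node set \<Rightarrow> bool" where
  closed: "TN \<phi> x \<in> B \<Longrightarrow> FN \<phi> x \<in> B \<Longrightarrow> closable B"
| ext1: "rule1 B E \<Longrightarrow> closable (B \<union> E) \<Longrightarrow> closable B"
| ext2: "rule2 B E1 E2 \<Longrightarrow> closable (B \<union> E1) \<Longrightarrow> closable (B \<union> E2) \<Longrightarrow> closable B"

definition derives :: "fm set \<Rightarrow> fm \<Rightarrow> bool" where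
  "derives T \<phi> \<longleftrightarrow> closable ((\<lambda>\<psi>. TN \<psi> (L 0)) ` T \<union> {FN \<phi> (L 0)})"

end

theory Submission
  imports Defs "HOL-Library.Countable" "HOL-Library.Nat_Bijection"
begin

text \<open>If \<open>T\<close> does not derive \<open>\<phi>\<close>, the initial branch is open. Applying every instance of
  every tableau rule infinitely often, each time choosing an extension that stays open, yields
  in the limit a Hintikka set: it has no clash, and whenever the premises of a rule instance are
  on it, so is one of its conclusions. Its labels, closed under the sharp, are the states of a
  JRC-model in which, by induction on formulas, \<open>\<chi>,+x\<close> on the branch makes \<open>\<chi>\<close> true at
  \<open>x\<close> and \<open>\<chi>,-x\<close> makes it false. Hence all of \<open>T\<close> holds and \<open>\<phi>\<close> fails at the normal
  state \<open>0\<close>, contradicting \<open>T \<Turnstile> \<phi>\<close>.\<close>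

lemma lbls_insert [simp]: "lbls (insert n B) = node_lbls n \<union> lbls B"
  unfolding lbls_def by auto

lemma lbls_mono: "A \<subseteq> B \<Longrightarrow> lbls A \<subseteq> lbls B"
  unfolding lbls_def by auto

lemma in_lblsI: "n \<in> B \<Longrightarrow> x \<in> node_lbls n \<Longrightarrow> x \<in> lbls B"
  unfolding lbls_def by auto

lemma lbls_TN: "TN \<phi> x \<in> B \<Longrightarrow> x \<in> lbls B"
  and lbls_FN: "FN \<phi> x \<in> B \<Longrightarrow> x \<in> lbls B"
  by (auto intro: in_lblsI)

lemma finite_lbls: "finite B \<Longrightarrow> finite (lbls B)"
proof -
  have "finite (node_lbls n)" for n
    by (cases n) auto
  then show "finite B \<Longrightarrow> finite (lbls B)"
    unfolding lbls_def by auto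
qed

lemma fresh_labels:
  assumes "finite B"
  obtains j k where "L j \<notin> lbls B" "L k \<notin> lbls B" "j \<noteq> k"
proof -
  have "finite (L -` lbls B)"
    using assms by (intro finite_vimageI finite_lbls) (simp_all add: inj_on_def)
  then obtain j where "j \<notin> L -` lbls B"
    using ex_new_if_finite infinite_UNIV_nat by blast
  moreover obtain k where "k \<notin> insert j (L -` lbls B)"
    using \<open>finite (L -` lbls B)\<close> ex_new_if_finite infinite_UNIV_nat by (metis finite_insert)
  ultimately show thesis
    using that by auto
qed

instance tm :: countable by countable_datatype
instance fm :: countable by countable_datatype
instance lbl :: countable by countable_datatype

text \<open>An obligation is a rule instance: it is triggered when its premises are on the branch
  and fulfilled when one of its alternative conclusions is.\<close>

datatype obligation =
    TNeg fm lbl | FNeg fm lbl | TConj fm fm lbl | FConj fm fm lbl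
  | TImp fm fm lbl lbl lbl | FImp fm fm lbl | TCImp fm fm lbl lbl | FCImp fm fm lbl
  | TJust tm fm lbl lbl | FJust tm fm lbl | PlusRel lbl tm tm lbl | Norm lbl | Cut fm lbl

instance obligation :: countable by countable_datatype

fun triggered :: "node set \<Rightarrow> obligation \<Rightarrow> bool" where
  "triggered B (TNeg \<phi> x) = (TN (Neg \<phi>) x \<in> B)"
| "triggered B (FNeg \<phi> x) = (FN (Neg \<phi>) x \<in> B)"
| "triggered B (TConj \<phi> \<psi> x) = (TN (Conj \<phi> \<psi>) x \<in> B)"
| "triggered B (FConj \<phi> \<psi> x) = (FN (Conj \<phi> \<psi>) x \<in> B)"
| "triggered B (TImp \<phi> \<psi> x y z) = (TN (Imp \<phi> \<psi>) x \<in> B \<and> R3 x y z \<in> B)"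
| "triggered B (FImp \<phi> \<psi> x) = (FN (Imp \<phi> \<psi>) x \<in> B)"
| "triggered B (TCImp \<phi> \<psi> x y) = (TN (CImp \<phi> \<psi>) x \<in> B \<and> RelF x \<phi> y \<in> B)"
| "triggered B (FCImp \<phi> \<psi> x) = (FN (CImp \<phi> \<psi>) x \<in> B)"
| "triggered B (TJust t \<phi> x y) = (TN (Just t \<phi>) x \<in> B \<and> RelT x t y \<in> B)"
| "triggered B (FJust t \<phi> x) = (FN (Just t \<phi>) x \<in> B)"
| "triggered B (PlusRel x s t y) = (RelT x (Plus s t) y \<in> B)"
| "triggered B (Norm x) = (x \<in> lbls B)"
| "triggered B (Cut \<phi> x) =
     ((\<exists>\<psi> y. TN (CImp \<phi> \<psi>) y \<in> B \<or> FN (CImp \<phi> \<psi>) y \<in> B) \<and> x \<in> lbls B)"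

fun fulfilled :: "node set \<Rightarrow> obligation \<Rightarrow> bool" where
  "fulfilled B (TNeg \<phi> x) = (FN \<phi> (bar x) \<in> B)"
| "fulfilled B (FNeg \<phi> x) = (TN \<phi> (bar x) \<in> B)"
| "fulfilled B (TConj \<phi> \<psi> x) = (TN \<phi> x \<in> B \<and> TN \<psi> x \<in> B)"
| "fulfilled B (FConj \<phi> \<psi> x) = (FN \<phi> x \<in> B \<or> FN \<psi> x \<in> B)"
| "fulfilled B (TImp \<phi> \<psi> x y z) = (FN \<phi> y \<in> B \<or> TN \<psi> z \<in> B)"
| "fulfilled B (FImp \<phi> \<psi> x) =
     (\<exists>j k. R3 x (L j) (L k) \<in> B \<and> TN \<phi> (L j) \<in> B \<and> FN \<psi> (L k) \<in> B \<and> (x = L 0 \<longrightarrow> j = k))"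
| "fulfilled B (TCImp \<phi> \<psi> x y) = (TN \<psi> y \<in> B)"
| "fulfilled B (FCImp \<phi> \<psi> x) = (\<exists>j. RelF x \<phi> (L j) \<in> B \<and> FN \<psi> (L j) \<in> B)"
| "fulfilled B (TJust t \<phi> x y) = (TN \<phi> y \<in> B)"
| "fulfilled B (FJust t \<phi> x) = (\<exists>j. RelT x t (L j) \<in> B \<and> FN \<phi> (L j) \<in> B)"
| "fulfilled B (PlusRel x s t y) = (RelT x s y \<in> B \<and> RelT x t y \<in> B)"
| "fulfilled B (Norm x) = (R3 (L 0) x x \<in> B)"
| "fulfilled B (Cut \<phi> x) = (FN \<phi> x \<in> B \<or> (TN \<phi> x \<in> B \<and> RelF x \<phi> x \<in> B))"

lemma triggered_mono: "triggered A ob \<Longrightarrow> A \<subseteq> B \<Longrightarrow> triggered B ob"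
  by (cases ob) (auto dest: lbls_mono)

lemma fulfilled_mono: "fulfilled A ob \<Longrightarrow> A \<subseteq> B \<Longrightarrow> fulfilled B ob"
  by (cases ob) auto

lemma triggered_finite_witness:
  assumes "triggered B ob"
  shows "\<exists>N. finite N \<and> N \<subseteq> B \<and> triggered N ob"
  using assms
proof (cases ob)
  case (TImp \<phi> \<psi> x y z)
  with assms show ?thesis
    by (intro exI[of _ "{TN (Imp \<phi> \<psi>) x, R3 x y z}"]) auto
next
  case (TCImp \<phi> \<psi> x y)
  with assms show ?thesis
    by (intro exI[of _ "{TN (CImp \<phi> \<psi>) x, RelF x \<phi> y}"]) auto
next
  case (TJust t \<phi> x y)
  with assms show ?thesis
    by (intro exI[of _ "{TN (Just t \<phi>) x, RelT x t y}"]) auto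
next
  case (Norm x)
  with assms obtain n where "n \<in> B" "x \<in> node_lbls n"
    by (auto simp: lbls_def)
  with Norm show ?thesis
    by (intro exI[of _ "{n}"]) auto
next
  case (Cut \<phi> x)
  with assms obtain n m where "m \<in> B" "\<exists>\<psi> y. m = TN (CImp \<phi> \<psi>) y \<or> m = FN (CImp \<phi> \<psi>) y"
    "n \<in> B" "x \<in> node_lbls n"
    by (auto simp: lbls_def)
  with Cut show ?thesis
    by (intro exI[of _ "{m, n}"]) auto
qed (auto intro!: exI[where x="{_}"])

lemma fulfilling_rule_application:
  assumes "finite B" "triggered B ob"
  obtains E where "rule1 B E" "fulfilled (B \<union> E) ob"
    | E1 E2 where "rule2 B E1 E2" "fulfilled (B \<union> E1) ob" "fulfilled (B \<union> E2) ob"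
proof -
  obtain j k where fresh: "L j \<notin> lbls B" "L k \<notin> lbls B" "j \<noteq> k"
    using fresh_labels[OF assms(1)] .
  show thesis
  proof (cases ob)
    case (FImp \<phi> \<psi> x)
    define k' where "k' = (if x = L 0 then j else k)"
    have "rule1 B {R3 x (L j) (L k'), TN \<phi> (L j), FN \<psi> (L k')}"
      using assms fresh FImp by (auto simp: k'_def intro: rule1.F_imp)
    with FImp show thesis
      using that(1) by (fastforce simp: k'_def)
  next
    case (FCImp \<phi> \<psi> x)
    show thesis
    proof (cases "x = L 0")
      case True
      then have "rule1 B {RelF x \<phi> (L j), TN \<phi> (L j), FN \<psi> (L j)}"
        using assms fresh FCImp by (auto intro: rule1.F_cimp0)
      with FCImp show thesis
        using that(1) by fastforce
    next
      case False
      then have "rule1 B {RelF x \<phi> (L j), FN \<psi> (L j)}"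
        using assms fresh FCImp by (auto intro: rule1.F_cimp)
      with FCImp show thesis
        using that(1) by fastforce
    qed
  next
    case (FJust t \<phi> x)
    then have "rule1 B {RelT x t (L j), FN \<phi> (L j)}"
      using assms fresh by (auto intro: rule1.F_just)
    with FJust show thesis
      using that(1) by fastforce
  qed (use assms that in \<open>fastforce intro: rule1.intros rule2.intros\<close>)+
qed

text \<open>The rules adding \<open>0 \<rhd>\<^sub>\<phi> j\<close> also add \<open>\<phi>,+j\<close>; this invariant gives condition (1) of a
  JRC-model at the normal state.\<close>

definition normal_RelF_true :: "node set \<Rightarrow> bool" where
  "normal_RelF_true B \<longleftrightarrow> (\<forall>\<phi> v. RelF (L 0) \<phi> v \<in> B \<longrightarrow> TN \<phi> v \<in> B)"

definition open_branch :: "node set \<Rightarrow> bool" where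
  "open_branch B \<longleftrightarrow> finite B \<and> \<not> closable B \<and> normal_RelF_true B"

lemma rule1_new_nodes:
  "rule1 B E \<Longrightarrow> finite E \<and> normal_RelF_true E"
  unfolding normal_RelF_true_def by (induction rule: rule1.induct) auto

lemma rule2_new_nodes:
  "rule2 B E1 E2 \<Longrightarrow> finite E1 \<and> finite E2 \<and> normal_RelF_true E1 \<and> normal_RelF_true E2"
  unfolding normal_RelF_true_def by (induction rule: rule2.induct) auto

lemma open_branch_rule1:
  "open_branch B \<Longrightarrow> rule1 B E \<Longrightarrow> open_branch (B \<union> E)"
  using rule1_new_nodes closable.ext1
  unfolding open_branch_def normal_RelF_true_def by blast

lemma open_branch_rule2:
  "open_branch B \<Longrightarrow> rule2 B E1 E2 \<Longrightarrow> open_branch (B \<union> E1) \<or> open_branch (B \<union> E2)"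
  using rule2_new_nodes closable.ext2
  unfolding open_branch_def normal_RelF_true_def by blast

lemma open_branch_fulfil:
  assumes "open_branch B" "triggered B ob"
  shows "\<exists>B'. B \<subseteq> B' \<and> open_branch B' \<and> fulfilled B' ob"
proof -
  have "finite B"
    using assms(1) by (simp add: open_branch_def)
  then show ?thesis
    using assms(2)
  proof (cases rule: fulfilling_rule_application)
    case (1 E)
    with open_branch_rule1[OF assms(1)] show ?thesis
      by (intro exI[of _ "B \<union> E"]) simp
  next
    case (2 E1 E2)
    with open_branch_rule2[OF assms(1)] show ?thesis
      by (metis Un_upper1)
  qed
qed

definition fulfil_step :: "node set \<Rightarrow> obligation \<Rightarrow> node set" where
  "fulfil_step B ob =
     (if triggered B ob then SOME B'. B \<subseteq> B' \<and> open_branch B' \<and> fulfilled B' ob else B)"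

lemma fulfil_step_spec:
  assumes "open_branch B"
  shows "B \<subseteq> fulfil_step B ob" "open_branch (fulfil_step B ob)"
    "triggered B ob \<Longrightarrow> fulfilled (fulfil_step B ob) ob"
  using someI_ex[OF open_branch_fulfil[OF assms]] assms
  by (auto simp: fulfil_step_def)

text \<open>Stage \<open>n + 1\<close> treats obligation number \<open>fst (prod_decode n)\<close>, so every obligation
  is treated at infinitely many stages.\<close>

primrec saturation_chain :: "node set \<Rightarrow> nat \<Rightarrow> node set" where
  "saturation_chain B 0 = B"
| "saturation_chain B (Suc n) =
     fulfil_step (saturation_chain B n) (from_nat (fst (prod_decode n)))"

definition saturation :: "node set \<Rightarrow> node set" where
  "saturation B = (\<Union>n. saturation_chain B n)"

lemma open_branch_saturation_chain:
  "open_branch B \<Longrightarrow> open_branch (saturation_chain B n)"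
  by (induction n) (simp_all add: fulfil_step_spec)

lemma saturation_chain_mono:
  assumes "open_branch B" "m \<le> n"
  shows "saturation_chain B m \<subseteq> saturation_chain B n"
  using lift_Suc_mono_le[of "saturation_chain B", OF _ assms(2)]
  by (simp add: fulfil_step_spec open_branch_saturation_chain[OF assms(1)])

lemma saturation_chain_subset: "saturation_chain B n \<subseteq> saturation B"
  unfolding saturation_def by blast

lemma finite_subset_saturation:
  assumes "open_branch B" "finite N" "N \<subseteq> saturation B"
  shows "\<exists>n. N \<subseteq> saturation_chain B n"
  using assms(2,3)
proof (induction N rule: finite_induct)
  case (insert x N)
  then obtain m n where "N \<subseteq> saturation_chain B n" "x \<in> saturation_chain B m"
    by (auto simp: saturation_def)
  then have "insert x N \<subseteq> saturation_chain B (max m n)"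
    using saturation_chain_mono[OF assms(1), of m "max m n"]
      saturation_chain_mono[OF assms(1), of n "max m n"] by auto
  then show ?case ..
qed simp

lemma saturation_fulfilled:
  assumes "open_branch B" "triggered (saturation B) ob"
  shows "fulfilled (saturation B) ob"
proof -
  obtain N where N: "finite N" "N \<subseteq> saturation B" "triggered N ob"
    using triggered_finite_witness[OF assms(2)] by blast
  then obtain n where "N \<subseteq> saturation_chain B n"
    using finite_subset_saturation[OF assms(1)] by blast
  define m where "m = prod_encode (to_nat ob, n)"
  have "n \<le> m"
    unfolding m_def by (rule le_prod_encode_2)
  then have "triggered (saturation_chain B m) ob"
    using N(3) \<open>N \<subseteq> saturation_chain B n\<close> saturation_chain_mono[OF assms(1)]
    by (meson order_trans triggered_mono)
  then have "fulfilled (saturation_chain B (Suc m)) ob"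
    by (simp add: m_def fulfil_step_spec open_branch_saturation_chain[OF assms(1)])
  then show ?thesis
    using fulfilled_mono saturation_chain_subset by blast
qed

definition hintikka :: "node set \<Rightarrow> bool" where
  "hintikka B \<longleftrightarrow> L 0 \<in> lbls B \<and> (\<forall>\<phi> x. TN \<phi> x \<in> B \<longrightarrow> FN \<phi> x \<notin> B) \<and>
     normal_RelF_true B \<and> (\<forall>ob. triggered B ob \<longrightarrow> fulfilled B ob)"

lemma hintikka_fulfilled: "hintikka B \<Longrightarrow> triggered B ob \<Longrightarrow> fulfilled B ob"
  by (simp add: hintikka_def)

lemma hintikka_saturation:
  assumes "open_branch B" "L 0 \<in> lbls B"
  shows "hintikka (saturation B)"
proof -
  have "B \<subseteq> saturation B"
    using saturation_chain_subset[of B 0] by simp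
  moreover have "FN \<phi> x \<notin> saturation B" if "TN \<phi> x \<in> saturation B" for \<phi> x
  proof
    assume "FN \<phi> x \<in> saturation B"
    with that obtain n where "{TN \<phi> x, FN \<phi> x} \<subseteq> saturation_chain B n"
      using finite_subset_saturation[OF assms(1), of "{TN \<phi> x, FN \<phi> x}"] by auto
    then have "closable (saturation_chain B n)"
      by (auto intro: closable.closed)
    then show False
      using open_branch_saturation_chain[OF assms(1)] by (simp add: open_branch_def)
  qed
  moreover have "normal_RelF_true (saturation B)"
    using open_branch_saturation_chain[OF assms(1)]
    unfolding open_branch_def normal_RelF_true_def saturation_def by blast
  ultimately show ?thesis
    unfolding hintikka_def using assms lbls_mono saturation_fulfilled by blast
qed

lemma hintikka_if_not_derives:
  assumes "finite T" "\<not> derives T \<phi>"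
  obtains B where "hintikka B" "\<forall>\<psi>\<in>T. TN \<psi> (L 0) \<in> B" "FN \<phi> (L 0) \<in> B"
proof -
  define B where "B = (\<lambda>\<psi>. TN \<psi> (L 0)) ` T \<union> {FN \<phi> (L 0)}"
  have "open_branch B"
    using assms unfolding open_branch_def derives_def B_def normal_RelF_true_def by auto
  moreover have "L 0 \<in> lbls B"
    unfolding B_def by (auto intro: in_lblsI[of "FN \<phi> (L 0)"])
  moreover have "B \<subseteq> saturation B"
    using saturation_chain_subset[of B 0] by simp
  ultimately show thesis
    using that[of "saturation B"] hintikka_saturation unfolding B_def by blast
qed

section \<open>The canonical countermodel\<close>

lemma bar_bar [simp]: "bar (bar x) = x"
  by (cases x) auto

text \<open>The star has to map states to states, so a label whose mirror image occurs on the branch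
  is a state as well; if it does not occur itself, it borrows the relations of its mirror
  image.\<close>

definition world :: "node set \<Rightarrow> lbl \<Rightarrow> bool" where
  "world B x \<longleftrightarrow> x \<in> lbls B \<or> bar x \<in> lbls B"

definition rep :: "node set \<Rightarrow> lbl \<Rightarrow> lbl" where
  "rep B x = (if x \<in> lbls B then x else bar x)"

definition can_R :: "node set \<Rightarrow> lbl \<Rightarrow> lbl \<Rightarrow> lbl \<Rightarrow> bool" where
  "can_R B x y z \<longleftrightarrow> world B x \<and>
     (if rep B x = L 0 then world B y \<and> y = z else R3 (rep B x) y z \<in> B)"

definition can_RF :: "node set \<Rightarrow> fm \<Rightarrow> lbl \<Rightarrow> lbl \<Rightarrow> bool" where
  "can_RF B \<phi> x y \<longleftrightarrow> world B x \<and> RelF (rep B x) \<phi> y \<in> B"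

definition can_RT :: "node set \<Rightarrow> tm \<Rightarrow> lbl \<Rightarrow> lbl \<Rightarrow> bool" where
  "can_RT B t x y \<longleftrightarrow> world B x \<and> RelT (rep B x) t y \<in> B"

definition can_V :: "node set \<Rightarrow> nat \<Rightarrow> lbl \<Rightarrow> bool" where
  "can_V B p x \<longleftrightarrow> world B x \<and> TN (Atom p) (rep B x) \<in> B"

text \<open>The reflexive pairs demanded by condition (2) are added to \<open>R\<^sub>\<phi>\<close> here; they only depend
  on the truth of \<open>\<phi>\<close> itself, so this is still a recursion on formulas.\<close>

fun can_sat :: "node set \<Rightarrow> lbl \<Rightarrow> fm \<Rightarrow> bool" where
  "can_sat B x (Atom p) = can_V B p x"
| "can_sat B x (Neg \<phi>) = (\<not> can_sat B (bar x) \<phi>)"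
| "can_sat B x (Conj \<phi> \<psi>) = (can_sat B x \<phi> \<and> can_sat B x \<psi>)"
| "can_sat B x (Imp \<phi> \<psi>) = (\<forall>y z. can_R B x y z \<longrightarrow> can_sat B y \<phi> \<longrightarrow> can_sat B z \<psi>)"
| "can_sat B x (CImp \<phi> \<psi>) =
     (\<forall>y. (can_RF B \<phi> x y \<or> (y = x \<and> world B x \<and> can_sat B x \<phi>)) \<longrightarrow> can_sat B y \<psi>)"
| "can_sat B x (Just t \<phi>) = (\<forall>y. can_RT B t x y \<longrightarrow> can_sat B y \<phi>)"

lemma world_rep: "world B x \<Longrightarrow> rep B x \<in> lbls B"
  by (auto simp: world_def rep_def)

lemma rep_rep: "world B x \<Longrightarrow> rep B (rep B x) = rep B x"
  by (auto simp: world_def rep_def)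

lemma world_repI: "world B x \<Longrightarrow> world B (rep B x)"
  by (auto simp: world_def rep_def)

lemma can_sat_rep: "world B x \<Longrightarrow> can_sat B x \<phi> = can_sat B (rep B x) \<phi>"
proof (induction \<phi> arbitrary: x)
  case (Atom p)
  then show ?case
    by (simp add: can_V_def world_repI rep_rep)
next
  case (Neg \<phi>)
  show ?case
  proof (cases "x \<in> lbls B")
    case False
    then have "rep B x = bar x"
      by (simp add: rep_def)
    with Neg.IH[OF Neg.prems] show ?thesis
      by simp
  qed (simp add: rep_def)
next
  case (Conj \<phi> \<psi>)
  show ?case
    using Conj.IH[OF Conj.prems] by simp
next
  case (Imp \<phi> \<psi>)
  from Imp.prems have "can_R B x = can_R B (rep B x)"
    by (auto simp: can_R_def world_repI rep_rep fun_eq_iff)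
  then show ?case
    by (simp only: can_sat.simps)
next
  case (CImp \<phi> \<psi>)
  have "can_RF B \<phi> x = can_RF B \<phi> (rep B x)"
    using CImp.prems by (auto simp: can_RF_def world_repI rep_rep fun_eq_iff)
  moreover have "can_sat B x \<phi> = can_sat B (rep B x) \<phi>" "can_sat B x \<psi> = can_sat B (rep B x) \<psi>"
    using CImp.IH[OF CImp.prems] by blast+
  ultimately show ?case
    using CImp.prems world_repI[OF CImp.prems] by auto
next
  case (Just t \<phi>)
  from Just.prems have "can_RT B t x = can_RT B t (rep B x)"
    by (auto simp: can_RT_def world_repI rep_rep fun_eq_iff)
  then show ?case
    by (simp only: can_sat.simps)
qed

lemma rep_lbls: "x \<in> lbls B \<Longrightarrow> rep B x = x"
  and world_lbls: "x \<in> lbls B \<Longrightarrow> world B x"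
  by (simp_all add: rep_def world_def)

definition truthful :: "node set \<Rightarrow> fm \<Rightarrow> bool" where
  "truthful B \<phi> \<longleftrightarrow> (\<forall>x. (TN \<phi> x \<in> B \<longrightarrow> can_sat B x \<phi>) \<and> (FN \<phi> x \<in> B \<longrightarrow> \<not> can_sat B x \<phi>))"

lemma truthful_Atom: "hintikka B \<Longrightarrow> truthful B (Atom p)"
  unfolding truthful_def hintikka_def can_sat.simps can_V_def
  by (metis lbls_TN lbls_FN rep_lbls world_lbls)

lemma truthful_Neg: "hintikka B \<Longrightarrow> truthful B \<phi> \<Longrightarrow> truthful B (Neg \<phi>)"
  using hintikka_fulfilled[of B "TNeg \<phi> _"] hintikka_fulfilled[of B "FNeg \<phi> _"]
  by (auto simp: truthful_def)

lemma truthful_Conj: "hintikka B \<Longrightarrow> truthful B \<phi> \<Longrightarrow> truthful B \<psi> \<Longrightarrow> truthful B (Conj \<phi> \<psi>)"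
  using hintikka_fulfilled[of B "TConj \<phi> \<psi> _"] hintikka_fulfilled[of B "FConj \<phi> \<psi> _"]
  by (auto simp: truthful_def)

lemma truthful_Imp:
  assumes B: "hintikka B" and IH: "truthful B \<phi>" "truthful B \<psi>"
  shows "truthful B (Imp \<phi> \<psi>)"
  unfolding truthful_def
proof (intro allI conjI impI)
  fix x
  assume x: "TN (Imp \<phi> \<psi>) x \<in> B"
  then have rx: "rep B x = x"
    by (intro rep_lbls lbls_TN)
  show "can_sat B x (Imp \<phi> \<psi>)"
  proof (clarsimp)
    fix y z
    assume yz: "can_R B x y z" and "can_sat B y \<phi>"
    show "can_sat B z \<psi>"
    proof (cases "x = L 0")
      case True
      with yz rx have "z = y" "world B y"
        by (auto simp: can_R_def)
      define r where "r = rep B y"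
      \<comment> \<open>the normal state relates every state to itself; Normality puts the matching
        triple on the branch\<close>
      have "R3 (L 0) r r \<in> B"
        using hintikka_fulfilled[OF B, of "Norm r"] world_rep[OF \<open>world B y\<close>] by (simp add: r_def)
      then have "FN \<phi> r \<in> B \<or> TN \<psi> r \<in> B"
        using hintikka_fulfilled[OF B, of "TImp \<phi> \<psi> x r r"] x True by simp
      with IH \<open>can_sat B y \<phi>\<close> show ?thesis
        using can_sat_rep[OF \<open>world B y\<close>] \<open>z = y\<close> by (auto simp: truthful_def r_def)
    next
      case False
      with yz rx have "R3 x y z \<in> B"
        by (simp add: can_R_def)
      then have "FN \<phi> y \<in> B \<or> TN \<psi> z \<in> B"
        using hintikka_fulfilled[OF B, of "TImp \<phi> \<psi> x y z"] x by simp
      with IH \<open>can_sat B y \<phi>\<close> show ?thesis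
        by (auto simp: truthful_def)
    qed
  qed
next
  fix x
  assume x: "FN (Imp \<phi> \<psi>) x \<in> B"
  then obtain j k where jk: "R3 x (L j) (L k) \<in> B" "TN \<phi> (L j) \<in> B" "FN \<psi> (L k) \<in> B"
    "x = L 0 \<longrightarrow> j = k"
    using hintikka_fulfilled[OF B, of "FImp \<phi> \<psi> x"] by auto
  have "can_R B x (L j) (L k)"
    using jk lbls_FN[OF x] by (auto simp: can_R_def rep_lbls world_lbls dest: lbls_TN)
  with IH jk show "\<not> can_sat B x (Imp \<phi> \<psi>)"
    by (auto simp: truthful_def)
qed

lemma truthful_CImp:
  assumes B: "hintikka B" and IH: "truthful B \<phi>" "truthful B \<psi>"
  shows "truthful B (CImp \<phi> \<psi>)"
  unfolding truthful_def
proof (intro allI conjI impI)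
  fix x
  assume x: "TN (CImp \<phi> \<psi>) x \<in> B"
  then have rx: "rep B x = x" and "x \<in> lbls B"
    by (auto intro: rep_lbls lbls_TN)
  have "TN \<psi> y \<in> B" if "RelF x \<phi> y \<in> B" for y
    using hintikka_fulfilled[OF B, of "TCImp \<phi> \<psi> x y"] x that by simp
  moreover have "TN \<psi> x \<in> B" if "can_sat B x \<phi>"
  proof -
    \<comment> \<open>Cut decides \<open>\<phi>\<close> at \<open>x\<close> and, if \<open>\<phi>\<close> is true, supplies the reflexive pair\<close>
    have "FN \<phi> x \<in> B \<or> RelF x \<phi> x \<in> B"
      using hintikka_fulfilled[OF B, of "Cut \<phi> x"] x \<open>x \<in> lbls B\<close> by auto
    with IH(1) that \<open>RelF x \<phi> x \<in> B \<Longrightarrow> TN \<psi> x \<in> B\<close> show ?thesis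
      by (auto simp: truthful_def)
  qed
  ultimately show "can_sat B x (CImp \<phi> \<psi>)"
    using IH(2) rx by (auto simp: can_RF_def truthful_def)
next
  fix x
  assume x: "FN (CImp \<phi> \<psi>) x \<in> B"
  then obtain j where "RelF x \<phi> (L j) \<in> B" "FN \<psi> (L j) \<in> B"
    using hintikka_fulfilled[OF B, of "FCImp \<phi> \<psi> x"] by auto
  with IH(2) lbls_FN[OF x] show "\<not> can_sat B x (CImp \<phi> \<psi>)"
    by (auto simp: truthful_def can_RF_def rep_lbls world_lbls)
qed

lemma truthful_Just:
  assumes B: "hintikka B" and IH: "truthful B \<phi>"
  shows "truthful B (Just t \<phi>)"
  unfolding truthful_def
proof (intro allI conjI impI)
  fix x
  assume x: "TN (Just t \<phi>) x \<in> B"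
  have "TN \<phi> y \<in> B" if "RelT x t y \<in> B" for y
    using hintikka_fulfilled[OF B, of "TJust t \<phi> x y"] x that by simp
  with IH lbls_TN[OF x] show "can_sat B x (Just t \<phi>)"
    by (auto simp: truthful_def can_RT_def rep_lbls)
next
  fix x
  assume x: "FN (Just t \<phi>) x \<in> B"
  then obtain j where "RelT x t (L j) \<in> B" "FN \<phi> (L j) \<in> B"
    using hintikka_fulfilled[OF B, of "FJust t \<phi> x"] by auto
  with IH lbls_FN[OF x] show "\<not> can_sat B x (Just t \<phi>)"
    by (auto simp: truthful_def can_RT_def rep_lbls world_lbls)
qed

lemma truth_lemma: "hintikka B \<Longrightarrow> truthful B \<phi>"
  by (induction \<phi>)
    (simp_all add: truthful_Atom truthful_Neg truthful_Conj truthful_Imp truthful_CImp truthful_Just)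

fun lbl_encode :: "lbl \<Rightarrow> nat" where
  "lbl_encode (L i) = 2 * i"
| "lbl_encode (S i) = 2 * i + 1"

definition lbl_decode :: "nat \<Rightarrow> lbl" where
  "lbl_decode n = (if even n then L (n div 2) else S (n div 2))"

lemma lbl_decode_encode [simp]: "lbl_decode (lbl_encode x) = x"
  by (cases x) (simp_all add: lbl_decode_def)

lemma lbl_encode_decode [simp]: "lbl_encode (lbl_decode n) = n"
  by (simp add: lbl_decode_def)

lemma lbl_decode_0 [simp]: "lbl_decode 0 = L 0"
  by (simp add: lbl_decode_def)

lemma all_lbl_decode: "(\<forall>n. P (lbl_decode n)) \<longleftrightarrow> (\<forall>x. P x)"
  by (metis lbl_decode_encode)

lemma lbl_decode_eq_iff [simp]: "lbl_decode m = lbl_decode n \<longleftrightarrow> m = n"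
  by (metis lbl_encode_decode)

definition canonical_model :: "node set \<Rightarrow> nat rmodel" where
  "canonical_model B =
     \<lparr>W = {w. world B (lbl_decode w)},
      WN = {lbl_encode (L 0)},
      R = (\<lambda>w v u. can_R B (lbl_decode w) (lbl_decode v) (lbl_decode u)),
      RF = (\<lambda>\<phi> w v. can_RF B \<phi> (lbl_decode w) (lbl_decode v) \<or>
              (v = w \<and> world B (lbl_decode w) \<and> can_sat B (lbl_decode w) \<phi>)),
      RT = (\<lambda>t w v. can_RT B t (lbl_decode w) (lbl_decode v)),
      st = (\<lambda>w. lbl_encode (bar (lbl_decode w))),
      V = (\<lambda>p. {w. can_V B p (lbl_decode w)})\<rparr>"

lemma sat_canonical_model: "sat (canonical_model B) w \<phi> \<longleftrightarrow> can_sat B (lbl_decode w) \<phi>"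
  by (induction \<phi> arbitrary: w) (simp_all add: canonical_model_def all_lbl_decode[symmetric])

lemma world_node_lbls: "n \<in> B \<Longrightarrow> x \<in> node_lbls n \<Longrightarrow> world B x"
  by (auto simp: world_def intro: in_lblsI)

lemma world_bar [simp]: "world B (bar x) = world B x"
  by (auto simp: world_def)

lemma can_R_world: "can_R B x y z \<Longrightarrow> world B x \<and> world B y \<and> world B z"
  using world_node_lbls[of "R3 (rep B x) y z" B] by (auto simp: can_R_def split: if_splits)

lemma can_RF_world: "can_RF B \<phi> x y \<Longrightarrow> world B x \<and> world B y"
  using world_node_lbls[of "RelF (rep B x) \<phi> y" B] by (auto simp: can_RF_def)

lemma can_RT_world: "can_RT B t x y \<Longrightarrow> world B x \<and> world B y"
  using world_node_lbls[of "RelT (rep B x) t y" B] by (auto simp: can_RT_def)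

lemma can_R_normal: "L 0 \<in> lbls B \<Longrightarrow> can_R B (L 0) y z \<longleftrightarrow> world B y \<and> y = z"
  by (simp add: can_R_def rep_lbls world_lbls)

lemma routley_canonical_model:
  assumes "L 0 \<in> lbls B"
  shows "routley_model (canonical_model B)"
  unfolding routley_model_def
proof (intro conjI)
  have "world B (L 0)"
    using assms by (rule world_lbls)
  then show "W (canonical_model B) \<noteq> {}"
    by (auto simp: canonical_model_def intro!: exI[of _ 0])
  show "\<forall>w\<in>WN (canonical_model B). \<forall>v\<in>W (canonical_model B). \<forall>u\<in>W (canonical_model B).
      R (canonical_model B) w v u \<longleftrightarrow> v = u"
    using assms by (auto simp: canonical_model_def can_R_normal)
qed (use assms world_lbls can_R_world can_RF_world can_RT_world in
      \<open>auto simp: canonical_model_def can_V_def\<close>)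

lemma jrc_canonical_model:
  assumes B: "hintikka B"
  shows "jrc_model (canonical_model B)"
  unfolding jrc_model_def
proof (intro conjI)
  have "L 0 \<in> lbls B"
    using B by (simp add: hintikka_def)
  then show "routley_model (canonical_model B)"
    by (rule routley_canonical_model)
  have "can_sat B y \<phi>" if "can_RF B \<phi> (L 0) y" for \<phi> y
  proof -
    have "RelF (L 0) \<phi> y \<in> B"
      using that \<open>L 0 \<in> lbls B\<close> by (simp add: can_RF_def rep_lbls)
    then have "TN \<phi> y \<in> B"
      using B by (simp add: hintikka_def normal_RelF_true_def)
    then show ?thesis
      using truth_lemma[OF B] by (simp add: truthful_def)
  qed
  then show "\<forall>w\<in>WN (canonical_model B). \<forall>\<phi> v. RF (canonical_model B) \<phi> w v \<longrightarrow>
      sat (canonical_model B) v \<phi>"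
    unfolding sat_canonical_model by (auto simp: canonical_model_def)
  show "\<forall>w\<in>W (canonical_model B). \<forall>\<phi>. sat (canonical_model B) w \<phi> \<longrightarrow>
      RF (canonical_model B) \<phi> w w"
    unfolding sat_canonical_model by (simp add: canonical_model_def)
  have "can_RT B s x y \<and> can_RT B t x y" if "can_RT B (Plus s t) x y" for s t x y
    using that hintikka_fulfilled[OF B, of "PlusRel (rep B x) s t y"] by (simp add: can_RT_def)
  then show "\<forall>s t w v. RT (canonical_model B) (Plus s t) w v \<longrightarrow>
      RT (canonical_model B) s w v \<and> RT (canonical_model B) t w v"
    unfolding canonical_model_def rmodel.simps by blast
qed

theorem mainTheorem18:
  fixes T :: "fm set" and \<phi> :: fm
  assumes "finite T"
    and "entails T \<phi>"
  shows "derives T \<phi>"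
proof (rule ccontr)
  assume "\<not> derives T \<phi>"
  with assms(1) obtain B where B: "hintikka B" "\<forall>\<psi>\<in>T. TN \<psi> (L 0) \<in> B" "FN \<phi> (L 0) \<in> B"
    by (rule hintikka_if_not_derives)
  have "jrc_model (canonical_model B)"
    using B(1) by (rule jrc_canonical_model)
  moreover have "0 \<in> WN (canonical_model B)"
    by (simp add: canonical_model_def)
  moreover have "\<forall>\<psi>\<in>T. sat (canonical_model B) 0 \<psi>" "\<not> sat (canonical_model B) 0 \<phi>"
    using B truth_lemma[OF B(1)] by (auto simp: sat_canonical_model truthful_def)
  ultimately show False
    using assms(2) unfolding entails_def by blast
qed

end
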